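(* For every $x\in i\mathfrak{k}^*$ and $g_1,g_2\in G$, $$\chi_x(g_2g_1)=\chi_{g_1\cdot x}(g_2)\,\chi_x(g_1).$$
   Context: $K$ is a compact connected Lie group with Lie algebra $\mathfrak{k}$, $G=K_{\mathbb{C}}$, $\mathfrak{g}=\mathbb{C}\otimes_{\mathbb{R}}\mathfrak{k}$, $i\mathfrak{k}^*$ the real space of complex-linear functionals on $\mathfrak{g}$ real on $i\mathfrak{k}$, with coadjoint $K$-action and pairing $\langle\cdot,\cdot\rangle$. Fix a Borel subgroup $B\le G$; $T=B\cap K$, $\mathfrak{t}$ its Lie algebra, $\mathfrak{a}=i\mathfrak{t}$, $A=\exp\mathfrak{a}$, $N=[B,B]$. Iwasawa decomposition $g=kan$ ($k\in K,a\in A,n\in N$ unique); write $k(g)=k$ and $\alpha(g)\in\mathfrak{a}$ with $\exp\alpha(g)=a$. $i\mathfrak{t}^*_+\subseteq i\mathfrak{k}^*$ is the closed dominant Weyl chamber; each $x\in i\mathfrak{k}^*$ is $x=h\cdot x_0$ with $h\in K$ and unique $x_0\in i\mathfrak{t}^*_+$. The extended action of $G$ on $i\mathfrak{k}^*$ is $g\cdot x:=k(gh)\cdot x_0$, and $\chi_x(g):=e^{2\langle x_0,\alpha(gh)\rangle}$; both are independent of the choice of $h$. *)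

theory Defs
  imports Complex_Main "HOL-Algebra.Group"
begin

text \<open>Parameters:
  G      : the complex group K_C (as a HOL-Algebra group),
  K      : the compact subgroup K (carrier set),
  N      : the subgroup N = [B,B],
  expA   : the exponential map from the real vector space 'a (= Lie algebra of A) into G,
  act    : the coadjoint action of K on 'v (= i k^*),
  C      : the closed dominant Weyl chamber in 'v,
  pair   : the pairing between i k^* and the Lie algebra of A.\<close>

definition iw_k :: "('g, 'm) monoid_scheme \<Rightarrow> 'g set \<Rightarrow> 'g set \<Rightarrow> ('a \<Rightarrow> 'g) \<Rightarrow> 'g \<Rightarrow> 'g" where
  "iw_k G K N expA g =
     (SOME k. k \<in> K \<and> (\<exists>a. \<exists>n\<in>N. g = k \<otimes>\<^bsub>G\<^esub> expA a \<otimes>\<^bsub>G\<^esub> n))"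

definition iw_alpha :: "('g, 'm) monoid_scheme \<Rightarrow> 'g set \<Rightarrow> 'g set \<Rightarrow> ('a \<Rightarrow> 'g) \<Rightarrow> 'g \<Rightarrow> 'a" where
  "iw_alpha G K N expA g =
     (SOME a. \<exists>k\<in>K. \<exists>n\<in>N. g = k \<otimes>\<^bsub>G\<^esub> expA a \<otimes>\<^bsub>G\<^esub> n)"

definition dom_part :: "('g \<Rightarrow> 'v \<Rightarrow> 'v) \<Rightarrow> 'g set \<Rightarrow> 'v set \<Rightarrow> 'v \<Rightarrow> 'v" where
  "dom_part act K C x = (THE x0. x0 \<in> C \<and> (\<exists>h\<in>K. x = act h x0))"

definition dom_h :: "('g \<Rightarrow> 'v \<Rightarrow> 'v) \<Rightarrow> 'g set \<Rightarrow> 'v set \<Rightarrow> 'v \<Rightarrow> 'g" where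
  "dom_h act K C x = (SOME h. h \<in> K \<and> x = act h (dom_part act K C x))"

definition ext_act where
  "ext_act G K N expA act C g x =
     act (iw_k G K N expA (g \<otimes>\<^bsub>G\<^esub> dom_h act K C x)) (dom_part act K C x)"

definition chi where
  "chi G K N expA act C (pair :: 'v \<Rightarrow> 'a \<Rightarrow> real) x g =
     exp (2 * pair (dom_part act K C x) (iw_alpha G K N expA (g \<otimes>\<^bsub>G\<^esub> dom_h act K C x)))"

definition iwasawa_setting ::
  "('g, 'm) monoid_scheme \<Rightarrow> 'g set \<Rightarrow> 'g set \<Rightarrow> ('a::real_vector \<Rightarrow> 'g)
   \<Rightarrow> ('g \<Rightarrow> 'v::real_vector \<Rightarrow> 'v) \<Rightarrow> 'v set \<Rightarrow> ('v \<Rightarrow> 'a \<Rightarrow> real) \<Rightarrow> bool" where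
  "iwasawa_setting G K N expA act C pair \<longleftrightarrow>
     group G \<and> subgroup K G \<and> subgroup N G
   \<and> range expA \<subseteq> carrier G
   \<and> inj expA
   \<and> (\<forall>a b. expA (a + b) = expA a \<otimes>\<^bsub>G\<^esub> expA b)
   \<and> (\<forall>a. \<forall>n\<in>N. inv\<^bsub>G\<^esub> (expA a) \<otimes>\<^bsub>G\<^esub> n \<otimes>\<^bsub>G\<^esub> expA a \<in> N)
   \<and> (\<forall>g\<in>carrier G. \<exists>!(k, a, n). k \<in> K \<and> n \<in> N \<and> g = k \<otimes>\<^bsub>G\<^esub> expA a \<otimes>\<^bsub>G\<^esub> n)
   \<and> (\<forall>x. act \<one>\<^bsub>G\<^esub> x = x)
   \<and> (\<forall>k1\<in>K. \<forall>k2\<in>K. \<forall>x. act (k1 \<otimes>\<^bsub>G\<^esub> k2) x = act k1 (act k2 x))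
   \<and> (\<forall>k\<in>K. linear (act k))
   \<and> (\<forall>x. \<exists>!x0. x0 \<in> C \<and> (\<exists>h\<in>K. x = act h x0))
   \<and> (\<forall>x. linear (pair x)) \<and> (\<forall>a. linear (\<lambda>x. pair x a))
   \<comment> \<open>independence of the choice of h (stated as a fact in the paper's context)\<close>
   \<and> (\<forall>x0\<in>C. \<forall>h\<in>K. \<forall>h'\<in>K. act h x0 = act h' x0 \<longrightarrow>
        (\<forall>g\<in>carrier G.
           act (iw_k G K N expA (g \<otimes>\<^bsub>G\<^esub> h)) x0 = act (iw_k G K N expA (g \<otimes>\<^bsub>G\<^esub> h')) x0
         \<and> pair x0 (iw_alpha G K N expA (g \<otimes>\<^bsub>G\<^esub> h)) = pair x0 (iw_alpha G K N expA (g \<otimes>\<^bsub>G\<^esub> h'))))"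

end

theory Submission
  imports Defs
begin

text \<open>Write \<open>x = h \<cdot> x0\<close>. If \<open>g1 h = k1 a1 n1\<close> and \<open>g2 k1 = k2 a2 n2\<close>, then
  \<open>g2 g1 h = k2 (a2 a1) (a1\<inverse> n2 a1 n1)\<close> because \<open>A\<close> normalises \<open>N\<close>, so
  \<open>\<alpha>(g2 g1 h) = \<alpha>(g2 k1) + \<alpha>(g1 h)\<close>. The point \<open>g1 \<cdot> x = k1 \<cdot> x0\<close> has the same
  dominant representative \<open>x0\<close>, so by independence of the choice of \<open>h\<close> we may use
  \<open>k1\<close> in place of \<open>h\<close> when computing \<open>\<chi>\<close> at \<open>g1 \<cdot> x\<close>; linearity of the pairing
  then turns the additivity of \<open>\<alpha>\<close> into the product formula.\<close>

locale iwasawa_decomposition = group G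
  for G :: "('g, 'm) monoid_scheme" (structure) +
  fixes K N :: "'g set" and expA :: "'a::real_vector \<Rightarrow> 'g"
  assumes K_subgroup: "subgroup K G"
    and N_subgroup: "subgroup N G"
    and expA_closed: "expA a \<in> carrier G"
    and expA_add: "expA (a + b) = expA a \<otimes> expA b"
    and expA_normalizes_N: "n \<in> N \<Longrightarrow> inv (expA a) \<otimes> n \<otimes> expA a \<in> N"
    and decomposition_unique:
      "g \<in> carrier G \<Longrightarrow> \<exists>!(k, a, n). k \<in> K \<and> n \<in> N \<and> g = k \<otimes> expA a \<otimes> n"

lemma iwasawa_setting_imp_decomposition:
  assumes "iwasawa_setting G K N expA act C pair"
  shows "iwasawa_decomposition G K N expA"
  by (rule iwasawa_decomposition.intro)
    (use assms[unfolded iwasawa_setting_def] in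
      \<open>auto simp: iwasawa_decomposition_axioms_def range_subsetD\<close>)

lemma iwasawa_setting_unique_rep:
  assumes "iwasawa_setting G K N expA act C pair"
  shows "\<exists>!x0. x0 \<in> C \<and> (\<exists>h\<in>K. x = act h x0)"
  using assms unfolding iwasawa_setting_def by (elim conjE) (erule allE)

lemma iwasawa_setting_pair_linear:
  assumes "iwasawa_setting G K N expA act C pair"
  shows "linear (pair x)"
  using assms unfolding iwasawa_setting_def by simp

lemma iwasawa_setting_alpha_independent:
  assumes "iwasawa_setting G K N expA act C pair"
    and "x0 \<in> C" "h \<in> K" "h' \<in> K" "act h x0 = act h' x0" "g \<in> carrier G"
  shows "pair x0 (iw_alpha G K N expA (g \<otimes>\<^bsub>G\<^esub> h)) = pair x0 (iw_alpha G K N expA (g \<otimes>\<^bsub>G\<^esub> h'))"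
proof -
  have "\<forall>x0\<in>C. \<forall>h\<in>K. \<forall>h'\<in>K. act h x0 = act h' x0 \<longrightarrow>
        (\<forall>g\<in>carrier G.
           act (iw_k G K N expA (g \<otimes>\<^bsub>G\<^esub> h)) x0 = act (iw_k G K N expA (g \<otimes>\<^bsub>G\<^esub> h')) x0
         \<and> pair x0 (iw_alpha G K N expA (g \<otimes>\<^bsub>G\<^esub> h)) = pair x0 (iw_alpha G K N expA (g \<otimes>\<^bsub>G\<^esub> h')))"
    using assms(1) unfolding iwasawa_setting_def by (elim conjE)
  with assms(2-) show ?thesis by blast
qed

context iwasawa_decomposition
begin

lemma K_closed: "k \<in> K \<Longrightarrow> k \<in> carrier G"
  using subgroup.subset[OF K_subgroup] by blast

lemma N_closed: "n \<in> N \<Longrightarrow> n \<in> carrier G"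
  using subgroup.subset[OF N_subgroup] by blast

lemma decomposition_eq:
  assumes "k \<in> K" "n \<in> N" "k' \<in> K" "n' \<in> N"
    and "k \<otimes> expA a \<otimes> n = k' \<otimes> expA a' \<otimes> n'"
  shows "k' = k" "a' = a"
proof -
  define P where "P = (\<lambda>(k, a, n). k \<in> K \<and> n \<in> N \<and> k' \<otimes> expA a' \<otimes> n' = k \<otimes> expA a \<otimes> n)"
  have "k' \<otimes> expA a' \<otimes> n' \<in> carrier G"
    using assms by (simp add: K_closed N_closed expA_closed)
  then have "\<exists>!t. P t"
    unfolding P_def by (rule decomposition_unique)
  moreover have "P (k, a, n)" "P (k', a', n')"
    unfolding P_def using assms by simp_all
  ultimately have "(k', a', n') = (k, a, n)"
    by (metis the1_equality)
  then show "k' = k" "a' = a" by simp_all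
qed

lemma iw_k_alpha_eq:
  assumes k: "k \<in> K" and n: "n \<in> N"
  shows "iw_k G K N expA (k \<otimes> expA a \<otimes> n) = k"
    and "iw_alpha G K N expA (k \<otimes> expA a \<otimes> n) = a"
proof -
  let ?g = "k \<otimes> expA a \<otimes> n"
  have "\<exists>k'. k' \<in> K \<and> (\<exists>a'. \<exists>n'\<in>N. ?g = k' \<otimes> expA a' \<otimes> n')"
    using assms by blast
  from someI_ex[OF this] obtain a' n' where
    "iw_k G K N expA ?g \<in> K" "n' \<in> N" "?g = iw_k G K N expA ?g \<otimes> expA a' \<otimes> n'"
    unfolding iw_k_def by blast
  from decomposition_eq(1)[OF k n this] show "iw_k G K N expA ?g = k" .
  have "\<exists>a'. \<exists>k'\<in>K. \<exists>n'\<in>N. ?g = k' \<otimes> expA a' \<otimes> n'"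
    using assms by blast
  from someI_ex[OF this] obtain k' n' where
    "k' \<in> K" "n' \<in> N" "?g = k' \<otimes> expA (iw_alpha G K N expA ?g) \<otimes> n'"
    unfolding iw_alpha_def by blast
  from decomposition_eq(2)[OF k n this] show "iw_alpha G K N expA ?g = a" .
qed

lemma iw_decomposition:
  assumes "g \<in> carrier G"
  obtains n where "iw_k G K N expA g \<in> K" "n \<in> N"
    "g = iw_k G K N expA g \<otimes> expA (iw_alpha G K N expA g) \<otimes> n"
proof -
  obtain k a n where k: "k \<in> K" and n: "n \<in> N" and g: "g = k \<otimes> expA a \<otimes> n"
    using decomposition_unique[OF assms] by auto
  have "iw_k G K N expA g = k" "iw_alpha G K N expA g = a"
    unfolding g using iw_k_alpha_eq[OF k n] by simp_all
  with k n g show thesis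
    by (intro that[of n]) simp_all
qed

lemma iw_alpha_mult:
  assumes g1: "g1 \<in> carrier G" and g2: "g2 \<in> carrier G"
  shows "iw_alpha G K N expA (g2 \<otimes> g1)
         = iw_alpha G K N expA (g2 \<otimes> iw_k G K N expA g1) + iw_alpha G K N expA g1"
proof -
  define k1 where "k1 = iw_k G K N expA g1"
  define a1 where "a1 = iw_alpha G K N expA g1"
  obtain n1 where k1: "k1 \<in> K" and n1: "n1 \<in> N" and e1: "g1 = k1 \<otimes> expA a1 \<otimes> n1"
    using iw_decomposition[OF g1] unfolding k1_def a1_def .
  have g2k1: "g2 \<otimes> k1 \<in> carrier G"
    using g2 k1 by (simp add: K_closed)
  define a2 where "a2 = iw_alpha G K N expA (g2 \<otimes> k1)"
  obtain k2 n2 where k2: "k2 \<in> K" and n2: "n2 \<in> N" and e2: "g2 \<otimes> k1 = k2 \<otimes> expA a2 \<otimes> n2"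
    using iw_decomposition[OF g2k1] unfolding a2_def .
  define n where "n = inv (expA a1) \<otimes> n2 \<otimes> expA a1 \<otimes> n1"
  have n: "n \<in> N"
    unfolding n_def using expA_normalizes_N[OF n2] n1 subgroup.m_closed[OF N_subgroup] by blast
  note closed = K_closed[OF k1] K_closed[OF k2] N_closed[OF n1] N_closed[OF n2] expA_closed
  have "g2 \<otimes> g1 = (g2 \<otimes> k1) \<otimes> expA a1 \<otimes> n1"
    using e1 g2 closed by (simp add: m_assoc)
  also have "\<dots> = k2 \<otimes> (expA a2 \<otimes> expA a1) \<otimes> n"
  proof -
    have cancel: "expA a1 \<otimes> (inv (expA a1) \<otimes> z) = z" if "z \<in> carrier G" for z
      using that expA_closed by (simp add: r_inv flip: m_assoc)
    show ?thesis
      unfolding e2 n_def using closed by (simp add: m_assoc cancel)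
  qed
  also have "\<dots> = k2 \<otimes> expA (a2 + a1) \<otimes> n"
    by (simp add: expA_add)
  finally show ?thesis
    using iw_k_alpha_eq(2)[OF k2 n] unfolding k1_def a1_def a2_def by simp
qed

end

lemma dom_part_rep:
  assumes "\<exists>!x0. x0 \<in> C \<and> (\<exists>h\<in>K. x = act h x0)"
  shows "dom_part act K C x \<in> C" "dom_h act K C x \<in> K"
    and "x = act (dom_h act K C x) (dom_part act K C x)"
proof -
  have rep: "dom_part act K C x \<in> C \<and> (\<exists>h\<in>K. x = act h (dom_part act K C x))"
    unfolding dom_part_def using assms by (rule theI')
  then show "dom_part act K C x \<in> C" by blast
  have "dom_h act K C x \<in> K \<and> x = act (dom_h act K C x) (dom_part act K C x)"
    unfolding dom_h_def by (rule someI_ex) (use rep in blast)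
  then show "dom_h act K C x \<in> K" "x = act (dom_h act K C x) (dom_part act K C x)" by blast+
qed

lemma dom_part_eqI:
  assumes "\<exists>!x0. x0 \<in> C \<and> (\<exists>h\<in>K. x = act h x0)"
    and "x0 \<in> C" "h \<in> K" "x = act h x0"
  shows "dom_part act K C x = x0"
  unfolding dom_part_def by (rule the1_equality) (use assms in blast)+

lemma chi_ext_act:
  assumes S: "iwasawa_setting G K N expA act C pair"
    and g1: "g1 \<in> carrier G" and g2: "g2 \<in> carrier G"
  shows "chi G K N expA act C pair (ext_act G K N expA act C g1 x) g2
         = exp (2 * pair (dom_part act K C x)
             (iw_alpha G K N expA (g2 \<otimes>\<^bsub>G\<^esub> iw_k G K N expA (g1 \<otimes>\<^bsub>G\<^esub> dom_h act K C x))))"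
proof -
  define x0 where "x0 = dom_part act K C x"
  define h where "h = dom_h act K C x"
  interpret iwasawa_decomposition G K N expA
    using S by (rule iwasawa_setting_imp_decomposition)
  note unique_rep = iwasawa_setting_unique_rep[OF S]
  have x0: "x0 \<in> C" and h: "h \<in> K"
    unfolding x0_def h_def using dom_part_rep[OF unique_rep] by blast+
  define k1 where "k1 = iw_k G K N expA (g1 \<otimes>\<^bsub>G\<^esub> h)"
  define y where "y = ext_act G K N expA act C g1 x"
  have "g1 \<otimes>\<^bsub>G\<^esub> h \<in> carrier G"
    using g1 h by (simp add: K_closed)
  then have k1: "k1 \<in> K"
    unfolding k1_def by (rule iw_decomposition)
  have y: "y = act k1 x0"
    unfolding y_def ext_act_def k1_def x0_def h_def ..
  have y_x0: "dom_part act K C y = x0"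
    using dom_part_eqI[OF unique_rep x0 k1 y] .
  have h': "dom_h act K C y \<in> K" and y_h': "y = act (dom_h act K C y) x0"
    using dom_part_rep[OF unique_rep, of y] unfolding y_x0 by blast+
  have "pair x0 (iw_alpha G K N expA (g2 \<otimes>\<^bsub>G\<^esub> dom_h act K C y))
        = pair x0 (iw_alpha G K N expA (g2 \<otimes>\<^bsub>G\<^esub> k1))"
    using iwasawa_setting_alpha_independent[OF S x0 h' k1 _ g2] y y_h' by simp
  then show ?thesis
    unfolding chi_def y_def[symmetric] y_x0 k1_def x0_def h_def by simp
qed

theorem mainTheorem3:
  fixes G :: "('g, 'm) monoid_scheme" and K N :: "'g set" and expA :: "'a::real_vector \<Rightarrow> 'g"
    and act :: "'g \<Rightarrow> 'v::real_vector \<Rightarrow> 'v" and C :: "'v set" and pair :: "'v \<Rightarrow> 'a \<Rightarrow> real"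
    and x :: 'v and g1 g2 :: 'g
  assumes "iwasawa_setting G K N expA act C pair"
    and "g1 \<in> carrier G" and "g2 \<in> carrier G"
  shows "chi G K N expA act C pair x (g2 \<otimes>\<^bsub>G\<^esub> g1)
         = chi G K N expA act C pair (ext_act G K N expA act C g1 x) g2
           * chi G K N expA act C pair x g1"
proof -
  note S = assms(1) and g1 = assms(2) and g2 = assms(3)
  interpret iwasawa_decomposition G K N expA
    using S by (rule iwasawa_setting_imp_decomposition)
  define x0 where "x0 = dom_part act K C x"
  define h where "h = dom_h act K C x"
  have hG: "h \<in> carrier G"
    unfolding h_def using dom_part_rep(2)[OF iwasawa_setting_unique_rep[OF S]] K_closed by blast
  have "iw_alpha G K N expA (g2 \<otimes>\<^bsub>G\<^esub> g1 \<otimes>\<^bsub>G\<^esub> h)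
        = iw_alpha G K N expA (g2 \<otimes>\<^bsub>G\<^esub> iw_k G K N expA (g1 \<otimes>\<^bsub>G\<^esub> h)) + iw_alpha G K N expA (g1 \<otimes>\<^bsub>G\<^esub> h)"
    using iw_alpha_mult[of "g1 \<otimes>\<^bsub>G\<^esub> h" g2] g1 g2 hG by (simp add: m_assoc)
  moreover note iwasawa_setting_pair_linear[OF S, of x0]
  ultimately show ?thesis
    unfolding chi_ext_act[OF S g1 g2] unfolding chi_def x0_def[symmetric] h_def[symmetric]
    by (simp add: linear_add distrib_left exp_add)
qed

end
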